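(* The Koszul vector $\vec{k}= (k_1, \cdots, k_v)\in\mathbb{Z}_{+}^{v}$ associated to the standard complex structure $J_0$ on a flag manifold of classical type is given by \[ \begin{array}{ll} \mathrm{SU}_{n+1}/\mathrm{U}_1^{n_0}\times \mathrm{S}(\mathrm{U}_{n_1}\times\cdots\times\mathrm{U}_{n_s}): & \vec{k} = (2,\cdots, 2, 1+ n_1, n_1+n_2, \cdots, n_{s-1}+ n_s ), \\ \mathrm{SO}_{2n+1}/\mathrm{U}_1^{n_0}\times \mathrm{U}_{n_1}\times\cdots\times\mathrm{U}_{n_s}\times\mathrm{SO}_{2r+1}: & \vec{k} =(2,\cdots, 2, 1+ n_1, n_1+n_2, \cdots, n_{s-1}+ n_s, n_s+ 2r ), \\ \mathrm{Sp}_{n}/\mathrm{U}_1^{n_0}\times \mathrm{U}_{n_1}\times\cdots\times\mathrm{U}_{n_s}\times\mathrm{Sp}_{r}: & \vec{k} =(2,\cdots, 2, 1+ n_1, n_1+n_2, \cdots, n_{s-1}+ n_s, n_s+2r +1), \\ \mathrm{SO}_{2n}/\mathrm{U}_1^{n_0}\times \mathrm{U}_{n_1}\times\cdots\times\mathrm{U}_{n_s}\times\mathrm{SO}_{2r}: & \vec{k} =(2,\cdots, 2, 1+ n_1, n_1+n_2, \cdots, n_{s-1}+ n_s, n_s+2r-1), \end{array} \] with $n_0$ entries equal to $2$. If $r=0$, then the last Koszul number (over the end black root) is $2n_s$ for the $\mathrm{SO}_{2n+1}$ case, $n_s+1$ for the $\mathrm{Sp}_n$ case and $2(n_{s}-1)$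 for the $\mathrm{SO}_{2n}$ case.
   Context: Flag manifolds of the classical groups are $\mathrm{SU}_{n+1}/\mathrm{U}_1^{n_0}\times \mathrm{S}(\mathrm{U}_{n_1}\times\cdots\times\mathrm{U}_{n_s})$ ($\sum n_j=n+1$, $n_0\ge0$, $n_j>1$), $\mathrm{SO}_{2n+1}/\mathrm{U}_1^{n_0}\times \mathrm{U}_{n_1}\times\cdots\times\mathrm{U}_{n_s}\times\mathrm{SO}_{2r+1}$, $\mathrm{Sp}_{n}/\mathrm{U}_1^{n_0}\times \mathrm{U}_{n_1}\times\cdots\times\mathrm{U}_{n_s}\times\mathrm{Sp}_{r}$, $\mathrm{SO}_{2n}/\mathrm{U}_1^{n_0}\times \mathrm{U}_{n_1}\times\cdots\times\mathrm{U}_{n_s}\times\mathrm{SO}_{2r}$ ($n=\sum n_j+r$, $n_j>1$, $r\ge0$, $r\neq1$ for $\mathrm{SO}_{2n}$). An invariant complex structure corresponds to a splitting $\Pi=\Pi_W\sqcup\Pi_B$ of simple roots into white and black roots (painted Dynkin diagram); the standard complex structure $J_0$ is the one whose painted Dynkin diagram has the first $n_0$ nodes black and all other black nodes isolated, separating white strings of lengths $n_1-1,\dots,n_s-1$ (followed, for $\mathrm{SO}_{2n+1},\mathrm{Sp}_n,\mathrm{SO}_{2n}$, by the white subdiagram of $\mathrm{SO}_{2r+1},\mathrm{Sp}_r,\mathrm{SO}_{2r}$). The Koszul form is $\sigma^{J}=\sum_{\alpha\in R^+\setminus R^+_H}\alpha=\sum_{j=1}^v k_j\Lambda_j$, where $\Lambda_j$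 are the fundamental weights of the black simple roots $\beta_j$; the integers $k_j$ are the Koszul numbers. *)

theory Defs
  imports Complex_Main
begin

text \<open>Classical root systems in the standard orthonormal realisation.
  Weights are integer vectors, represented as functions nat => int; only the
  coordinates below ncoords are relevant.  Coordinates and simple roots are
  indexed from 0.\<close>

datatype ctype = TA | TB | TC | TD
  (* TA: SU_{n+1} (A_n), TB: SO_{2n+1} (B_n), TC: Sp_n (C_n), TD: SO_{2n} (D_n) *)

definition e :: "nat \<Rightarrow> nat \<Rightarrow> int" where
  "e i = (\<lambda>x. if x = i then 1 else 0)"

definition ncoords :: "ctype \<Rightarrow> nat \<Rightarrow> nat" where
  "ncoords T n = (if T = TA then n + 1 else n)"

definition inner :: "nat \<Rightarrow> (nat \<Rightarrow> int) \<Rightarrow> (nat \<Rightarrow> int) \<Rightarrow> int" where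
  "inner N u v = (\<Sum>x<N. u x * v x)"

definition pos_roots :: "ctype \<Rightarrow> nat \<Rightarrow> (nat \<Rightarrow> int) set" where
  "pos_roots T n =
    (if T = TA then {(\<lambda>x. e i x - e j x) | i j. i < j \<and> j \<le> n}
     else {(\<lambda>x. e i x - e j x) | i j. i < j \<and> j < n}
        \<union> {(\<lambda>x. e i x + e j x) | i j. i < j \<and> j < n}
        \<union> (if T = TB then {e i | i. i < n}
           else if T = TC then {(\<lambda>x. 2 * e i x) | i. i < n}
           else {}))"

text \<open>Simple roots alpha_0, ..., alpha_{n-1} (Bourbaki ordering).\<close>
definition simple_root :: "ctype \<Rightarrow> nat \<Rightarrow> nat \<Rightarrow> (nat \<Rightarrow> int)" where
  "simple_root T n i =
    (if T = TA \<or> i + 1 < n then (\<lambda>x. e i x - e (i + 1) x)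
     else if T = TB then e (n - 1)
     else if T = TC then (\<lambda>x. 2 * e (n - 1) x)
     else (\<lambda>x. e (n - 2) x + e (n - 1) x))"

text \<open>A painted Dynkin diagram: list of length n, entry i is True iff the simple
  root alpha_i is black.\<close>
definition in_span_white :: "ctype \<Rightarrow> nat \<Rightarrow> bool list \<Rightarrow> (nat \<Rightarrow> int) \<Rightarrow> bool" where
  "in_span_white T n black \<alpha> =
    (\<exists>c :: nat \<Rightarrow> int. \<alpha> = (\<lambda>x. \<Sum>i\<in>{i. i < n \<and> \<not> black ! i}. c i * simple_root T n i x))"

definition pos_roots_H :: "ctype \<Rightarrow> nat \<Rightarrow> bool list \<Rightarrow> (nat \<Rightarrow> int) set" where
  "pos_roots_H T n black = {\<alpha> \<in> pos_roots T n. in_span_white T n black \<alpha>}"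

definition koszul_form :: "ctype \<Rightarrow> nat \<Rightarrow> bool list \<Rightarrow> (nat \<Rightarrow> int)" where
  "koszul_form T n black =
    (\<lambda>x. \<Sum>\<alpha>\<in>pos_roots T n - pos_roots_H T n black. \<alpha> x)"

text \<open>Coefficient of a weight lambda at the fundamental weight of the simple root
  beta, i.e. the coroot pairing 2(lambda,beta)/(beta,beta).\<close>
definition coroot_pairing :: "ctype \<Rightarrow> nat \<Rightarrow> (nat \<Rightarrow> int) \<Rightarrow> (nat \<Rightarrow> int) \<Rightarrow> rat" where
  "coroot_pairing T n w \<beta> =
    of_int (2 * inner (ncoords T n) w \<beta>) / of_int (inner (ncoords T n) \<beta> \<beta>)"

definition koszul_numbers :: "ctype \<Rightarrow> nat \<Rightarrow> bool list \<Rightarrow> rat list" where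
  "koszul_numbers T n black =
    map (\<lambda>i. coroot_pairing T n (koszul_form T n black) (simple_root T n i))
        (filter (\<lambda>i. black ! i) [0..<n])"

text \<open>The flag manifold data: n0 = number of U_1 factors, ns = [n_1,...,n_s],
  r = rank of the last factor SO_{2r+1} / Sp_r / SO_{2r} (unused for type A).\<close>
definition flag_rank :: "ctype \<Rightarrow> nat \<Rightarrow> nat list \<Rightarrow> nat \<Rightarrow> nat" where
  "flag_rank T n0 ns r =
    (if T = TA then n0 + sum_list ns - 1 else n0 + sum_list ns + r)"

definition J0_diagram :: "ctype \<Rightarrow> nat \<Rightarrow> nat list \<Rightarrow> nat \<Rightarrow> bool list" where
  "J0_diagram T n0 ns r =
    (let d = replicate n0 True @ concat (map (\<lambda>m. replicate (m - 1) False @ [True]) ns)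
     in if T = TA then butlast d else d @ replicate r False)"

definition koszul_expected :: "ctype \<Rightarrow> nat \<Rightarrow> nat list \<Rightarrow> nat \<Rightarrow> nat list" where
  "koszul_expected T n0 ns r =
    (let L = replicate n0 1 @ ns;
         adj = map (\<lambda>i. L ! i + L ! (i + 1)) [0..<length L - 1];
         ls = last ns
     in if T = TA then adj
        else if T = TB then adj @ [if r = 0 then 2 * ls else ls + 2 * r]
        else if T = TC then adj @ [ls + 2 * r + 1]
        else adj @ [if r = 0 then 2 * (ls - 1) else ls + 2 * r - 1])"

end

theory Submission
  imports Defs
begin

text \<open>The black nodes of a painted diagram cut the coordinates into consecutive blocks.
  Summing the coordinates over one block kills every white simple root, and this characterises
  \<open>R\<^sub>H\<^sup>+\<close>: it consists of the \<open>e\<^sub>i - e\<^sub>j\<close> inside one block and, in types B, C, D, of the positive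
  roots supported on the last block, the one attached to the end of the diagram.  Summing the
  remaining positive roots, coordinate \<open>x\<close> of \<open>\<sigma>\<close> is the number of coordinates in later blocks
  minus the number in earlier blocks, shifted by \<open>n - 1 + \<epsilon>\<close> (\<open>\<epsilon> = 1, 2, 0\<close> in types B, C, D)
  off the last block and equal to \<open>0\<close> on it.  Hence pairing \<open>\<sigma>\<close> with \<open>\<alpha>\<^sub>k = e\<^sub>k - e\<^sub>k\<^sub>+\<^sub>1\<close> at a
  black node between blocks \<open>b\<close> and \<open>b + 1\<close> gives \<open>|B\<^sub>b| + |B\<^sub>b\<^sub>+\<^sub>1|\<close>, white nodes give \<open>0\<close>, and
  the end node of types B, C, D is computed directly.  For \<open>J\<^sub>0\<close> the block sizes are
  \<open>1, \<dots>, 1, n\<^sub>1, \<dots>, n\<^sub>s\<close>, followed by \<open>r\<close> in types B, C, D.\<close>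

section \<open>Roots as integer vectors\<close>

definition e_diff :: "nat \<Rightarrow> nat \<Rightarrow> nat \<Rightarrow> int" where
  "e_diff i j = (\<lambda>x. e i x - e j x)"

definition e_sum :: "nat \<Rightarrow> nat \<Rightarrow> nat \<Rightarrow> int" where
  "e_sum i j = (\<lambda>x. e i x + e j x)"

lemma e_apply: "e i x = (if x = i then 1 else 0)"
  by (simp add: e_def)

lemma e_diff_apply: "e_diff i j x = e i x - e j x"
  by (simp add: e_diff_def)

lemma e_sum_apply: "e_sum i j x = e i x + e j x"
  by (simp add: e_sum_def)

lemma sum_e: "finite S \<Longrightarrow> (\<Sum>y\<in>S. e i y) = (if i \<in> S then 1 else 0)"
  by (simp add: e_def sum.delta')

lemma sum_e_index: "finite S \<Longrightarrow> (\<Sum>i\<in>S. e i x) = (if x \<in> S then 1 else 0)"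
  by (simp add: e_def sum.delta)

lemma sum_mult_e: "finite S \<Longrightarrow> (\<Sum>y\<in>S. u y * e i y) = (if i \<in> S then u i else 0)"
  by (simp add: e_def if_distrib sum.delta' cong: if_cong)

lemma sum_e_diff:
  "finite S \<Longrightarrow> (\<Sum>y\<in>S. e_diff i j y) = (if i \<in> S then 1 else 0) - (if j \<in> S then 1 else 0)"
  by (simp add: e_diff_def sum_subtractf sum_e)

lemma inner_e: "i < N \<Longrightarrow> inner N u (e i) = u i"
  by (simp add: inner_def sum_mult_e)

lemma inner_double_e: "i < N \<Longrightarrow> inner N u (\<lambda>x. 2 * e i x) = 2 * u i"
  by (simp add: inner_def sum_mult_e mult.left_commute[of _ 2] sum_distrib_left[symmetric])

lemma inner_e_diff: "i < N \<Longrightarrow> j < N \<Longrightarrow> inner N u (e_diff i j) = u i - u j"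
  by (simp add: inner_def e_diff_def right_diff_distrib sum_subtractf sum_mult_e)

lemma inner_e_sum: "i < N \<Longrightarrow> j < N \<Longrightarrow> inner N u (e_sum i j) = u i + u j"
  by (simp add: inner_def e_sum_def distrib_left sum.distrib sum_mult_e)

lemma inj_on_e_diff: "inj_on (\<lambda>p. e_diff (fst p) (snd p)) {p. fst p < snd p}"
proof (rule inj_onI)
  fix p q :: "nat \<times> nat"
  assume "p \<in> {p. fst p < snd p}" "q \<in> {p. fst p < snd p}"
    and eq: "e_diff (fst p) (snd p) = e_diff (fst q) (snd q)"
  have "e_diff (fst q) (snd q) (fst p) = 1" "e_diff (fst q) (snd q) (snd p) = -1"
    using \<open>p \<in> _\<close> unfolding eq[symmetric] by (simp_all add: e_diff_def e_def)
  then show "p = q"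
    by (simp add: e_diff_def e_def prod_eq_iff split: if_splits)
qed

lemma inj_on_e_sum: "inj_on (\<lambda>p. e_sum (fst p) (snd p)) {p. fst p < snd p}"
proof (rule inj_onI)
  fix p q :: "nat \<times> nat"
  assume "p \<in> {p. fst p < snd p}" "q \<in> {p. fst p < snd p}"
    and eq: "e_sum (fst p) (snd p) = e_sum (fst q) (snd q)"
  have support: "e_sum a b y \<noteq> 0 \<longleftrightarrow> y = a \<or> y = b" for a b y
    by (simp add: e_sum_def e_def)
  have "y = fst p \<or> y = snd p \<longleftrightarrow> y = fst q \<or> y = snd q" for y
    using eq support[of "fst p" "snd p" y] support[of "fst q" "snd q" y] by simp
  from this[of "fst p"] this[of "snd p"] this[of "fst q"] this[of "snd q"]
  show "p = q"
    using \<open>p \<in> _\<close> \<open>q \<in> _\<close> by (simp add: prod_eq_iff) linarith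
qed

lemma e_diff_neq_e_sum: "i \<noteq> j \<Longrightarrow> e_diff i j \<noteq> e_sum a b"
proof
  assume "i \<noteq> j" "e_diff i j = e_sum a b"
  then have "e_diff i j j = e_sum a b j" by simp
  then show False using \<open>i \<noteq> j\<close> by (simp add: e_diff_def e_sum_def e_def split: if_splits)
qed

lemma sum_e_fst:
  assumes "finite P"
  shows "(\<Sum>p\<in>P. e (fst p) x) = int (card {j. (x, j) \<in> P})"
proof -
  have "(\<Sum>p\<in>P. e (fst p) x) = int (card {p\<in>P. fst p = x})"
    using assms by (simp add: e_def sum.inter_filter[symmetric] eq_commute)
  also have "{p\<in>P. fst p = x} = Pair x ` {j. (x, j) \<in> P}"
    by force
  finally show ?thesis
    by (simp add: card_image inj_on_def)
qed

lemma sum_e_snd: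
  assumes "finite P"
  shows "(\<Sum>p\<in>P. e (snd p) x) = int (card {i. (i, x) \<in> P})"
proof -
  have "(\<Sum>p\<in>P. e (snd p) x) = int (card {p\<in>P. snd p = x})"
    using assms by (simp add: e_def sum.inter_filter[symmetric] eq_commute)
  also have "{p\<in>P. snd p = x} = (\<lambda>i. (i, x)) ` {i. (i, x) \<in> P}"
    by force
  finally show ?thesis
    by (simp add: card_image inj_on_def)
qed

lemma sum_e_diff_pairs:
  "finite P \<Longrightarrow> (\<Sum>p\<in>P. e_diff (fst p) (snd p) x)
     = int (card {j. (x, j) \<in> P}) - int (card {i. (i, x) \<in> P})"
  by (simp add: e_diff_def sum_subtractf sum_e_fst sum_e_snd)

lemma sum_e_sum_pairs:
  "finite P \<Longrightarrow> (\<Sum>p\<in>P. e_sum (fst p) (snd p) x)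
     = int (card {j. (x, j) \<in> P}) + int (card {i. (i, x) \<in> P})"
  by (simp add: e_sum_def sum.distrib sum_e_fst sum_e_snd)

section \<open>Blocks of a painted diagram\<close>

definition num_black :: "bool list \<Rightarrow> nat" where
  "num_black d = length (filter id d)"

text \<open>The black node \<open>\<alpha>\<^sub>k\<close> separates the coordinates \<open>k\<close> and \<open>k + 1\<close>, so the coordinates
  fall into consecutive blocks and coordinate \<open>y\<close> lies in block number \<open>block_index d y\<close>.\<close>

definition block_index :: "bool list \<Rightarrow> nat \<Rightarrow> nat" where
  "block_index d y = num_black (take y d)"

lemma num_black_append [simp]: "num_black (xs @ ys) = num_black xs + num_black ys"
  by (simp add: num_black_def)

lemma num_black_replicate_False [simp]: "num_black (replicate k False) = 0"
  by (simp add: num_black_def)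

lemma num_black_Nil [simp]: "num_black [] = 0"
  by (simp add: num_black_def)

lemma num_black_Cons [simp]: "num_black (b # xs) = (if b then 1 else 0) + num_black xs"
  by (simp add: num_black_def)

lemma block_index_replicate_False [simp]: "block_index (replicate k False) y = 0"
  by (simp add: block_index_def)

lemma block_index_Suc:
  "k < length d \<Longrightarrow> block_index d (Suc k) = block_index d k + (if d ! k then 1 else 0)"
  by (simp add: block_index_def take_Suc_conv_app_nth)

lemma block_index_append:
  "block_index (xs @ ys) y
     = (if y \<le> length xs then block_index xs y else num_black xs + block_index ys (y - length xs))"
  by (simp add: block_index_def)

lemma block_index_beyond: "length d \<le> y \<Longrightarrow> block_index d y = num_black d"
  by (simp add: block_index_def)

lemma block_index_le_num_black: "block_index d y \<le> num_black d"
  by (metis append_take_drop_id le_add1 num_black_append block_index_def)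

lemma mono_block_index: "mono (block_index d)"
proof (rule monoI)
  fix k j :: nat
  assume "k \<le> j"
  then have "take j d = take k d @ take (j - k) (drop k d)"
    by (metis le_add_diff_inverse take_add)
  then show "block_index d k \<le> block_index d j"
    by (simp add: block_index_def)
qed

lemma block_index_black_nodes:
  "map (block_index d) (filter (\<lambda>k. d ! k) [0..<length d]) = [0..<num_black d]"
proof (induction d rule: rev_induct)
  case Nil
  then show ?case by simp
next
  case (snoc a xs)
  have "filter (\<lambda>k. (xs @ [a]) ! k) [0..<length xs] = filter (\<lambda>k. xs ! k) [0..<length xs]"
    by (rule filter_cong) (auto simp: nth_append)
  moreover have "map (block_index (xs @ [a])) (filter (\<lambda>k. xs ! k) [0..<length xs])
      = map (block_index xs) (filter (\<lambda>k. xs ! k) [0..<length xs])"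
    by (rule map_cong) (auto simp: block_index_append)
  moreover have "block_index (xs @ [a]) (length xs) = num_black xs"
    by (simp add: block_index_append block_index_beyond)
  ultimately show ?case
    using snoc.IH by (cases a) simp_all
qed

definition cross_pairs :: "(nat \<Rightarrow> nat) \<Rightarrow> nat \<Rightarrow> (nat \<times> nat) set" where
  "cross_pairs g N = {p. fst p < snd p \<and> snd p < N \<and> g (fst p) \<noteq> g (snd p)}"

lemma finite_cross_pairs: "finite (cross_pairs g N)"
  by (rule finite_subset[of _ "{..<N} \<times> {..<N}"]) (auto simp: cross_pairs_def)

lemma mono_less_imp_less: "mono g \<Longrightarrow> (g a :: 'a::linorder) < g b \<Longrightarrow> a < (b :: 'b::linorder)"
  by (metis leD monoD not_le_imp_less)

lemma sum_e_diff_cross_pairs: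
  assumes g: "mono g" and x: "x < N"
  shows "(\<Sum>p\<in>cross_pairs g N. e_diff (fst p) (snd p) x)
       = int (card {j\<in>{..<N}. g x < g j}) - int (card {i\<in>{..<N}. g i < g x})"
proof -
  have "(x, j) \<in> cross_pairs g N \<longleftrightarrow> j \<in> {j\<in>{..<N}. g x < g j}" for j
    using mono_less_imp_less[OF g, of x j] monoD[OF g, of x j] by (auto simp: cross_pairs_def)
  moreover have "(i, x) \<in> cross_pairs g N \<longleftrightarrow> i \<in> {i\<in>{..<N}. g i < g x}" for i
    using mono_less_imp_less[OF g, of i x] monoD[OF g, of i x] x by (auto simp: cross_pairs_def)
  ultimately show ?thesis
    by (simp add: sum_e_diff_pairs finite_cross_pairs set_eq_iff)
qed

definition block_size :: "(nat \<Rightarrow> nat) \<Rightarrow> nat \<Rightarrow> nat \<Rightarrow> nat" where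
  "block_size g N b = card {y\<in>{..<N}. g y = b}"

definition coords_before :: "(nat \<Rightarrow> nat) \<Rightarrow> nat \<Rightarrow> nat \<Rightarrow> nat" where
  "coords_before g N b = card {y\<in>{..<N}. g y < b}"

definition coords_after :: "(nat \<Rightarrow> nat) \<Rightarrow> nat \<Rightarrow> nat \<Rightarrow> nat" where
  "coords_after g N b = card {y\<in>{..<N}. b < g y}"

lemma coords_before_Suc: "coords_before g N (Suc b) = coords_before g N b + block_size g N b"
proof -
  have "{y\<in>{..<N}. g y < Suc b} = {y\<in>{..<N}. g y < b} \<union> {y\<in>{..<N}. g y = b}"
    by auto
  then show ?thesis
    unfolding coords_before_def block_size_def by (simp add: card_Un_disjoint disjoint_iff)
qed

lemma coords_after_Suc: "coords_after g N b = coords_after g N (Suc b) + block_size g N (Suc b)"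
proof -
  have "{y\<in>{..<N}. b < g y} = {y\<in>{..<N}. Suc b < g y} \<union> {y\<in>{..<N}. g y = Suc b}"
    by auto
  then show ?thesis
    unfolding coords_after_def block_size_def by (simp add: card_Un_disjoint disjoint_iff)
qed

lemma coords_partition: "coords_before g N b + block_size g N b + coords_after g N b = N"
proof -
  let ?B = "{y\<in>{..<N}. g y < b}" and ?S = "{y\<in>{..<N}. g y = b}" and ?A = "{y\<in>{..<N}. b < g y}"
  have "N = card ((?B \<union> ?S) \<union> ?A)"
    by (rule trans[OF card_lessThan[symmetric]], rule arg_cong[of _ _ card]) auto
  also have "\<dots> = card ?B + card ?S + card ?A"
    by (subst card_Un_disjoint, auto intro: card_Un_disjoint)
  finally show ?thesis
    unfolding coords_before_def block_size_def coords_after_def by simp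
qed

lemma coords_balance_step:
  "(int (coords_after g N b) - int (coords_before g N b))
     - (int (coords_after g N (Suc b)) - int (coords_before g N (Suc b)))
   = int (block_size g N b + block_size g N (Suc b))"
  by (simp add: coords_after_Suc[of g N b] coords_before_Suc)

section \<open>The span of the white simple roots\<close>

lemma in_span_white_zero: "in_span_white T n d (\<lambda>x. 0)"
  unfolding in_span_white_def by (rule exI[of _ "\<lambda>i. 0"]) simp

lemma in_span_white_add:
  assumes "in_span_white T n d u" and "in_span_white T n d v"
  shows "in_span_white T n d (\<lambda>x. u x + v x)"
proof -
  obtain c c' where
    "u = (\<lambda>x. \<Sum>i\<in>{i. i < n \<and> \<not> d ! i}. c i * simple_root T n i x)"
    "v = (\<lambda>x. \<Sum>i\<in>{i. i < n \<and> \<not> d ! i}. c' i * simple_root T n i x)"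
    using assms unfolding in_span_white_def by blast
  then show ?thesis
    unfolding in_span_white_def
    by (intro exI[of _ "\<lambda>i. c i + c' i"]) (simp add: distrib_right sum.distrib)
qed

lemma in_span_white_scale:
  assumes "in_span_white T n d u"
  shows "in_span_white T n d (\<lambda>x. z * u x)"
proof -
  obtain c where "u = (\<lambda>x. \<Sum>i\<in>{i. i < n \<and> \<not> d ! i}. c i * simple_root T n i x)"
    using assms unfolding in_span_white_def by blast
  then show ?thesis
    unfolding in_span_white_def
    by (intro exI[of _ "\<lambda>i. z * c i"]) (simp add: sum_distrib_left mult.assoc)
qed

lemma in_span_white_simple_root:
  assumes "k < n" and "\<not> d ! k"
  shows "in_span_white T n d (simple_root T n k)"
  unfolding in_span_white_def
proof (intro exI[of _ "\<lambda>i. if i = k then 1 else 0"] ext)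
  fix x
  have "(\<Sum>i\<in>{i. i < n \<and> \<not> d ! i}. (if i = k then 1 else 0) * simple_root T n i x)
      = (\<Sum>i\<in>{i. i < n \<and> \<not> d ! i}. (if i = k then simple_root T n i x else 0))"
    by (rule sum.cong) auto
  also have "\<dots> = simple_root T n k x"
    using assms by (simp add: sum.delta')
  finally show "simple_root T n k x
      = (\<Sum>i\<in>{i. i < n \<and> \<not> d ! i}. (if i = k then 1 else 0) * simple_root T n i x)"
    by simp
qed

text \<open>The necessary conditions for membership in the span all come from this: summing the
  coordinates over a set \<open>S\<close> is a linear functional, so it vanishes on the span as soon as it
  vanishes on every white simple root.\<close>

lemma sum_in_span_white_eq_0:
  assumes "in_span_white T n d v" and "finite S"
    and "\<And>k. k < n \<Longrightarrow> \<not> d ! k \<Longrightarrow> (\<Sum>y\<in>S. simple_root T n k y) = 0"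
  shows "(\<Sum>y\<in>S. v y) = 0"
proof -
  obtain c where v: "v = (\<lambda>x. \<Sum>i\<in>{i. i < n \<and> \<not> d ! i}. c i * simple_root T n i x)"
    using assms(1) unfolding in_span_white_def by blast
  have "(\<Sum>y\<in>S. v y) = (\<Sum>i\<in>{i. i < n \<and> \<not> d ! i}. c i * (\<Sum>y\<in>S. simple_root T n i y))"
    by (simp add: v sum_distrib_left) (rule sum.swap)
  also have "\<dots> = 0"
    using assms(3) by simp
  finally show ?thesis .
qed

lemma in_span_white_e_diff:
  assumes chain: "\<And>k. k < j \<Longrightarrow> k < n \<and> simple_root T n k = e_diff k (Suc k)"
    and len: "length d = n" and "i \<le> j" and same: "block_index d i = block_index d j"
  shows "in_span_white T n d (e_diff i j)"
  using \<open>i \<le> j\<close> same chain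
proof (induction j)
  case 0
  then show ?case
    by (simp add: e_diff_def in_span_white_zero)
next
  case (Suc j)
  show ?case
  proof (cases "i = Suc j")
    case True
    then show ?thesis
      by (simp add: e_diff_def in_span_white_zero)
  next
    case False
    then have "i \<le> j"
      using Suc.prems by simp
    have "j < n" and root: "simple_root T n j = e_diff j (Suc j)"
      using Suc.prems(3)[of j] by auto
    have "block_index d i \<le> block_index d j" "block_index d j \<le> block_index d (Suc j)"
      using \<open>i \<le> j\<close> monoD[OF mono_block_index] by auto
    then have same_j: "block_index d j = block_index d (Suc j)"
      using Suc.prems(2) by simp
    then have "\<not> d ! j"
      using block_index_Suc[of j d] \<open>j < n\<close> len by auto
    have "in_span_white T n d (\<lambda>x. e_diff i j x + e_diff j (Suc j) x)"
      using in_span_white_add[OF Suc.IH in_span_white_simple_root[OF \<open>j < n\<close> \<open>\<not> d ! j\<close>]]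
        \<open>i \<le> j\<close> same_j Suc.prems root by auto
    moreover have "(\<lambda>x. e_diff i j x + e_diff j (Suc j) x) = e_diff i (Suc j)"
      by (simp add: e_diff_def fun_eq_iff)
    ultimately show ?thesis
      by simp
  qed
qed

section \<open>Type A\<close>

lemma Collect_pairs_eq_image:
  "{f i j |i j. P i j} = (\<lambda>p. f (fst p) (snd p)) ` {p. P (fst p) (snd p)}"
  by (auto intro!: image_eqI[where x = "(_, _)"])

lemma simple_root_TA: "simple_root TA n k = e_diff k (Suc k)"
  by (simp add: simple_root_def e_diff_def)

lemma pos_roots_TA:
  "pos_roots TA n = (\<lambda>p. e_diff (fst p) (snd p)) ` {p. fst p < snd p \<and> snd p < Suc n}"
  unfolding pos_roots_def e_diff_def by (simp add: Collect_pairs_eq_image less_Suc_eq_le)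

lemma in_span_white_TA_e_diff_iff:
  assumes len: "length d = n" and "i < j" "j \<le> n"
  shows "in_span_white TA n d (e_diff i j) \<longleftrightarrow> block_index d i = block_index d j"
proof
  assume "block_index d i = block_index d j"
  then show "in_span_white TA n d (e_diff i j)"
    using assms by (intro in_span_white_e_diff[OF _ len]) (auto simp: simple_root_TA)
next
  assume span: "in_span_white TA n d (e_diff i j)"
  show "block_index d i = block_index d j"
  proof (rule ccontr)
    assume different: "block_index d i \<noteq> block_index d j"
    let ?S = "{y. y \<le> n \<and> block_index d y = block_index d i}"
    have "(\<Sum>y\<in>?S. e_diff i j y) = 0"
    proof (rule sum_in_span_white_eq_0[OF span])
      fix k
      assume "k < n" "\<not> d ! k"
      then have "block_index d (Suc k) = block_index d k"
        using block_index_Suc[of k d] len by simp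
      then show "(\<Sum>y\<in>?S. simple_root TA n k y) = 0"
        using \<open>k < n\<close> by (simp add: simple_root_TA sum_e_diff)
    qed simp
    moreover have "(\<Sum>y\<in>?S. e_diff i j y) = 1"
      using assms different by (simp add: sum_e_diff)
    ultimately show False
      by simp
  qed
qed

lemma pos_roots_TA_minus_H:
  assumes "length d = n"
  shows "pos_roots TA n - pos_roots_H TA n d
       = (\<lambda>p. e_diff (fst p) (snd p)) ` cross_pairs (block_index d) (Suc n)"
proof -
  have "pos_roots TA n - pos_roots_H TA n d = {\<alpha>\<in>pos_roots TA n. \<not> in_span_white TA n d \<alpha>}"
    by (auto simp: pos_roots_H_def)
  also have "\<dots> = (\<lambda>p. e_diff (fst p) (snd p)) ` cross_pairs (block_index d) (Suc n)"
    unfolding pos_roots_TA cross_pairs_def using in_span_white_TA_e_diff_iff[OF assms] by auto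
  finally show ?thesis .
qed

lemma koszul_form_TA:
  assumes "length d = n" and "x \<le> n"
  shows "koszul_form TA n d x
       = int (coords_after (block_index d) (Suc n) (block_index d x))
         - int (coords_before (block_index d) (Suc n) (block_index d x))"
proof -
  have "koszul_form TA n d x = (\<Sum>p\<in>cross_pairs (block_index d) (Suc n). e_diff (fst p) (snd p) x)"
    unfolding koszul_form_def pos_roots_TA_minus_H[OF assms(1)]
    by (rule sum.reindex[unfolded comp_def])
      (rule inj_on_subset[OF inj_on_e_diff], auto simp: cross_pairs_def)
  then show ?thesis
    using assms(2)
    by (simp add: sum_e_diff_cross_pairs mono_block_index coords_after_def coords_before_def)
qed

lemma coroot_pairing_TA:
  assumes len: "length d = n" and "k < n"
  shows "coroot_pairing TA n (koszul_form TA n d) (simple_root TA n k)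
       = (if d ! k then of_nat (block_size (block_index d) (Suc n) (block_index d k)
                                + block_size (block_index d) (Suc n) (Suc (block_index d k)))
          else 0)"
proof -
  let ?\<sigma> = "koszul_form TA n d"
  have "coroot_pairing TA n ?\<sigma> (simple_root TA n k) = of_int (?\<sigma> k - ?\<sigma> (Suc k))"
    using \<open>k < n\<close>
    by (simp add: coroot_pairing_def simple_root_TA ncoords_def inner_e_diff e_diff_apply e_def)
  moreover have "block_index d (Suc k) = block_index d k + (if d ! k then 1 else 0)"
    using block_index_Suc[of k d] \<open>k < n\<close> len by simp
  ultimately show ?thesis
    using koszul_form_TA[OF len, of k] koszul_form_TA[OF len, of "Suc k"] \<open>k < n\<close>
      coords_balance_step[of "block_index d" "Suc n" "block_index d k"]
    by simp
qed

theorem koszul_numbers_TA: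
  assumes "length d = n"
  shows "koszul_numbers TA n d
       = map (\<lambda>b. of_nat (block_size (block_index d) (Suc n) b
                          + block_size (block_index d) (Suc n) (Suc b))) [0..<num_black d]"
proof -
  have "koszul_numbers TA n d
      = map (\<lambda>k. of_nat (block_size (block_index d) (Suc n) (block_index d k)
                         + block_size (block_index d) (Suc n) (Suc (block_index d k))))
          (filter (\<lambda>k. d ! k) [0..<length d])"
    unfolding koszul_numbers_def using assms by (auto simp: coroot_pairing_TA)
  then show ?thesis
    by (simp add: block_index_black_nodes[symmetric])
qed

lemma koszul_pairing_white_TA:
  "length d = n \<Longrightarrow> k < n \<Longrightarrow> \<not> d ! k
    \<Longrightarrow> coroot_pairing TA n (koszul_form TA n d) (simple_root TA n k) = 0"
  by (simp add: coroot_pairing_TA)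

section \<open>Types B, C and D\<close>

definition axis_root :: "ctype \<Rightarrow> nat \<Rightarrow> nat \<Rightarrow> int" where
  "axis_root T i = (if T = TB then e i else (\<lambda>x. 2 * e i x))"

text \<open>The coefficient of \<open>e\<^sub>x\<close> in \<open>axis_root T x\<close>; type D has no axis roots at all.\<close>

definition axis_coeff :: "ctype \<Rightarrow> int" where
  "axis_coeff T = (if T = TB then 1 else if T = TC then 2 else 0)"

lemma e_diff_neq_axis_root: "i \<noteq> j \<Longrightarrow> e_diff i j \<noteq> axis_root T c"
proof
  assume "i \<noteq> j" "e_diff i j = axis_root T c"
  then have "e_diff i j j = axis_root T c j" by simp
  then show False using \<open>i \<noteq> j\<close> by (simp add: e_diff_def axis_root_def e_def split: if_splits)
qed

lemma e_sum_neq_axis_root: "a \<noteq> b \<Longrightarrow> e_sum a b \<noteq> axis_root T c"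
proof
  assume "a \<noteq> b" "e_sum a b = axis_root T c"
  then have "e_sum a b a = axis_root T c a" "e_sum a b b = axis_root T c b" by simp_all
  then show False using \<open>a \<noteq> b\<close> by (simp add: e_sum_def axis_root_def e_def split: if_splits)
qed

lemma inj_on_axis_root: "inj_on (axis_root T) A"
proof (rule inj_onI)
  fix a b
  assume "axis_root T a = axis_root T b"
  then have "axis_root T a a = axis_root T b a" by simp
  then show "a = b" by (simp add: axis_root_def e_def split: if_splits)
qed

lemma e_diff_image_Int_e_sum_image:
  "\<forall>p\<in>P. fst p \<noteq> snd p
    \<Longrightarrow> (\<lambda>p. e_diff (fst p) (snd p)) ` P \<inter> (\<lambda>p. e_sum (fst p) (snd p)) ` Q = {}"
  using e_diff_neq_e_sum by fastforce

lemma e_diff_image_Int_axis_roots: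
  "\<forall>p\<in>P. fst p \<noteq> snd p \<Longrightarrow> (\<lambda>p. e_diff (fst p) (snd p)) ` P \<inter> range (axis_root T) = {}"
  using e_diff_neq_axis_root by fastforce

lemma e_sum_image_Int_axis_roots:
  "\<forall>p\<in>P. fst p \<noteq> snd p \<Longrightarrow> (\<lambda>p. e_sum (fst p) (snd p)) ` P \<inter> range (axis_root T) = {}"
  using e_sum_neq_axis_root by fastforce

text \<open>In types B, C, D the last block, number \<open>num_black d\<close>, is the one attached to the end of
  the Dynkin diagram: positive roots supported on it lie in the white span although they are not
  differences \<open>e\<^sub>i - e\<^sub>j\<close>.  In type D the fork node \<open>\<alpha>\<^sub>n\<^sub>-\<^sub>2\<close> is required to be white, so that
  the coordinates \<open>n - 2\<close> and \<open>n - 1\<close>, which both enter the end root, lie in one block.\<close>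

locale BCD_diagram =
  fixes T :: ctype and n :: nat and d :: "bool list"
  assumes not_TA: "T \<noteq> TA" and length_d: "length d = n" and two_le_n: "2 \<le> n"
    and fork_white: "T = TD \<Longrightarrow> \<not> d ! (n - 2)"
begin

abbreviation block :: "nat \<Rightarrow> nat" where
  "block \<equiv> block_index d"

abbreviation last_block :: nat where
  "last_block \<equiv> num_black d"

abbreviation block_len :: "nat \<Rightarrow> nat" where
  "block_len \<equiv> block_size block n"

lemma cases_BCD:
  obtains "T = TB" | "T = TC" | "T = TD"
  using not_TA by (cases T) auto

lemma block_le_last: "block y \<le> last_block"
  by (rule block_index_le_num_black)

lemma block_mono: "i \<le> j \<Longrightarrow> block i \<le> block j"
  using mono_block_index by (rule monoD)

lemma block_n: "block n = last_block"
  using length_d by (simp add: block_index_beyond)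

lemma block_Suc: "k < n \<Longrightarrow> block (Suc k) = block k + (if d ! k then 1 else 0)"
  using block_index_Suc[of k d] length_d by simp

lemma simple_root_inner: "Suc k < n \<Longrightarrow> simple_root T n k = e_diff k (Suc k)"
  by (simp add: simple_root_def e_diff_def)

text \<open>Stated with \<open>n - Suc 0\<close>, the simp normal form of \<open>n - 1\<close>, so that they apply as
  rewrite rules.\<close>

lemma simple_root_TB_last: "simple_root TB n (n - Suc 0) = e (n - Suc 0)"
  using two_le_n by (simp add: simple_root_def)

lemma simple_root_TC_last: "simple_root TC n (n - Suc 0) = (\<lambda>x. 2 * e (n - Suc 0) x)"
  using two_le_n by (simp add: simple_root_def)

lemma simple_root_TD_last: "simple_root TD n (n - Suc 0) = e_sum (n - 2) (n - Suc 0)"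
  using two_le_n by (simp add: simple_root_def e_sum_def)

lemma fork_same_block: "T = TD \<Longrightarrow> block (n - 2) = block (n - 1)"
  using block_Suc[of "n - 2"] fork_white two_le_n by (simp add: Suc_diff_Suc numeral_2_eq_2)

lemma in_span_white_e_diff_same_block:
  "i \<le> j \<Longrightarrow> j < n \<Longrightarrow> block i = block j \<Longrightarrow> in_span_white T n d (e_diff i j)"
  by (rule in_span_white_e_diff[OF _ length_d]) (auto simp: simple_root_inner)

lemma last_block_reaches_end:
  assumes "j < n" and "block j = last_block"
  shows "\<not> d ! (n - 1)" and "block (n - 1) = last_block"
proof -
  have "block j \<le> block (n - 1)"
    using assms by (intro block_mono) simp
  moreover have "block n = block (n - 1) + (if d ! (n - 1) then 1 else 0)"
    using block_Suc[of "n - 1"] two_le_n by simp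
  ultimately show "\<not> d ! (n - 1)" and "block (n - 1) = last_block"
    using assms block_n block_le_last[of "n - 1"] by (auto split: if_splits)
qed

lemma in_span_white_last_root:
  "j < n \<Longrightarrow> block j = last_block \<Longrightarrow> in_span_white T n d (simple_root T n (n - 1))"
  using last_block_reaches_end in_span_white_simple_root[of "n - 1" n d T] two_le_n by simp

lemma in_span_white_axis_root:
  assumes "T \<noteq> TD" and "i < n" and "block i = last_block"
  shows "in_span_white T n d (axis_root T i)"
proof -
  have diff: "in_span_white T n d (e_diff i (n - 1))"
    using assms last_block_reaches_end by (intro in_span_white_e_diff_same_block) auto
  have last: "in_span_white T n d (simple_root T n (n - 1))"
    using in_span_white_last_root assms by blast
  consider "T = TB" | "T = TC"
    using assms(1) by (cases rule: cases_BCD) auto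
  then show ?thesis
  proof cases
    case 1
    then have "axis_root T i = (\<lambda>x. e_diff i (n - 1) x + simple_root T n (n - 1) x)"
      by (simp add: axis_root_def simple_root_TB_last e_diff_def)
    then show ?thesis
      using in_span_white_add[OF diff last] by simp
  next
    case 2
    then have "axis_root T i = (\<lambda>x. 2 * e_diff i (n - 1) x + simple_root T n (n - 1) x)"
      by (simp add: axis_root_def simple_root_TC_last e_diff_def fun_eq_iff algebra_simps)
    then show ?thesis
      using in_span_white_add[OF in_span_white_scale[OF diff] last] by simp
  qed
qed

lemma in_span_white_e_sum:
  assumes "i < j" and "j < n" and "block i = last_block"
  shows "in_span_white T n d (e_sum i j)"
proof -
  have "block j = last_block"
    using block_mono[of i j] block_le_last[of j] assms by simp
  then have "block (n - 1) = last_block"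
    by (rule last_block_reaches_end(2)[OF \<open>j < n\<close>])
  have last: "in_span_white T n d (simple_root T n (n - 1))"
    by (rule in_span_white_last_root[OF \<open>j < n\<close> \<open>block j = last_block\<close>])
  have diff_j: "in_span_white T n d (e_diff j (n - 1))"
    using assms \<open>block j = last_block\<close> \<open>block (n - 1) = last_block\<close>
    by (intro in_span_white_e_diff_same_block) auto
  consider "T = TB" | "T = TC" | "T = TD"
    by (rule cases_BCD)
  then show ?thesis
  proof cases
    case 1
    then have "e_sum i j = (\<lambda>x. axis_root T i x + axis_root T j x)"
      by (simp add: axis_root_def e_sum_def)
    moreover have "in_span_white T n d (axis_root T i)" "in_span_white T n d (axis_root T j)"
      using in_span_white_axis_root[of i] in_span_white_axis_root[of j]
        assms \<open>block j = last_block\<close> 1 by simp_all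
    ultimately show ?thesis
      using in_span_white_add[of T n d "axis_root T i" "axis_root T j"] by simp
  next
    case 2
    have diff_i: "in_span_white T n d (e_diff i (n - 1))"
      using assms \<open>block (n - 1) = last_block\<close> by (intro in_span_white_e_diff_same_block) auto
    have "e_sum i j = (\<lambda>x. (e_diff i (n - 1) x + e_diff j (n - 1) x) + simple_root T n (n - 1) x)"
      using 2 by (simp add: simple_root_TC_last e_diff_def e_sum_def fun_eq_iff)
    then show ?thesis
      using in_span_white_add[OF in_span_white_add[OF diff_i diff_j] last] by simp
  next
    case 3
    have diff_i: "in_span_white T n d (e_diff i (n - 2))"
      using assms fork_same_block[OF 3] \<open>block (n - 1) = last_block\<close>
      by (intro in_span_white_e_diff_same_block) auto
    have "e_sum i j = (\<lambda>x. (e_diff i (n - 2) x + e_diff j (n - 1) x) + simple_root T n (n - 1) x)"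
      using 3 by (simp add: simple_root_TD_last e_diff_def e_sum_def fun_eq_iff)
    then show ?thesis
      using in_span_white_add[OF in_span_white_add[OF diff_i diff_j] last] by simp
  qed
qed

definition block_coords :: "nat \<Rightarrow> nat set" where
  "block_coords b = {y\<in>{..<n}. block y = b}"

lemma sum_block_coords_in_span_white_eq_0:
  assumes span: "in_span_white T n d v" and "b < last_block"
  shows "(\<Sum>y\<in>block_coords b. v y) = 0"
proof (rule sum_in_span_white_eq_0[OF span])
  show "finite (block_coords b)"
    by (simp add: block_coords_def)
  fix k
  assume "k < n" "\<not> d ! k"
  show "(\<Sum>y\<in>block_coords b. simple_root T n k y) = 0"
  proof (cases "Suc k < n")
    case True
    then show ?thesis
      using block_Suc[OF \<open>k < n\<close>] \<open>\<not> d ! k\<close>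
      by (simp add: simple_root_inner sum_e_diff block_coords_def)
  next
    case False
    then have k: "k = n - 1"
      using \<open>k < n\<close> by simp
    then have "block (n - 1) = last_block"
      using block_Suc[of "n - 1"] two_le_n \<open>\<not> d ! k\<close> block_n by simp
    then have outside: "n - 1 \<notin> block_coords b" "T = TD \<Longrightarrow> n - 2 \<notin> block_coords b"
      using \<open>b < last_block\<close> fork_same_block by (auto simp: block_coords_def)
    have "finite (block_coords b)"
      by (simp add: block_coords_def)
    then show ?thesis
      using outside k
      by (cases rule: cases_BCD)
        (simp_all add: simple_root_TB_last simple_root_TC_last simple_root_TD_last
          e_sum_def sum.distrib sum_e sum_distrib_left[symmetric])
  qed
qed

lemma in_span_white_e_diff_iff:
  assumes "i < j" and "j < n"
  shows "in_span_white T n d (e_diff i j) \<longleftrightarrow> block i = block j"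
proof
  assume span: "in_span_white T n d (e_diff i j)"
  show "block i = block j"
  proof (rule ccontr)
    assume different: "block i \<noteq> block j"
    then have "block i < last_block"
      using block_mono[of i j] block_le_last[of j] assms by simp
    then have "(\<Sum>y\<in>block_coords (block i). e_diff i j y) = 0"
      using sum_block_coords_in_span_white_eq_0[OF span] by blast
    moreover have "(\<Sum>y\<in>block_coords (block i). e_diff i j y) = 1"
      using assms different by (simp add: sum_e_diff block_coords_def)
    ultimately show False
      by simp
  qed
qed (use assms in \<open>auto intro: in_span_white_e_diff_same_block\<close>)

lemma in_span_white_e_sum_iff:
  assumes "i < j" and "j < n"
  shows "in_span_white T n d (e_sum i j) \<longleftrightarrow> block i = last_block"
proof
  assume span: "in_span_white T n d (e_sum i j)"
  show "block i = last_block"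
  proof (rule ccontr)
    assume "block i \<noteq> last_block"
    then have "block i < last_block"
      using block_le_last[of i] by simp
    then have "(\<Sum>y\<in>block_coords (block i). e_sum i j y) = 0"
      using sum_block_coords_in_span_white_eq_0[OF span] by blast
    moreover have "(\<Sum>y\<in>block_coords (block i). e_sum i j y) \<ge> 1"
      using assms by (simp add: e_sum_def sum.distrib sum_e block_coords_def)
    ultimately show False
      by simp
  qed
qed (use assms in \<open>auto intro: in_span_white_e_sum\<close>)

lemma in_span_white_axis_root_iff:
  assumes "T \<noteq> TD" and "i < n"
  shows "in_span_white T n d (axis_root T i) \<longleftrightarrow> block i = last_block"
proof
  assume span: "in_span_white T n d (axis_root T i)"
  show "block i = last_block"
  proof (rule ccontr)
    assume "block i \<noteq> last_block"
    then have "block i < last_block"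
      using block_le_last[of i] by simp
    then have "(\<Sum>y\<in>block_coords (block i). axis_root T i y) = 0"
      using sum_block_coords_in_span_white_eq_0[OF span] by blast
    moreover have "(\<Sum>y\<in>block_coords (block i). axis_root T i y) \<ge> 1"
      using assms by (simp add: axis_root_def sum_e block_coords_def sum_distrib_left[symmetric])
    ultimately show False
      by simp
  qed
qed (use assms in \<open>auto intro: in_span_white_axis_root\<close>)

lemma pos_roots_BCD:
  "pos_roots T n = (\<lambda>p. e_diff (fst p) (snd p)) ` {p. fst p < snd p \<and> snd p < n}
     \<union> (\<lambda>p. e_sum (fst p) (snd p)) ` {p. fst p < snd p \<and> snd p < n}
     \<union> (if T = TD then {} else axis_root T ` {..<n})"
proof -
  have "{e i |i. i < n} = axis_root TB ` {..<n}" "{\<lambda>x. 2 * e i x |i. i < n} = axis_root TC ` {..<n}"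
    by (auto simp: axis_root_def)
  then show ?thesis
    unfolding pos_roots_def e_diff_def[abs_def] e_sum_def[abs_def]
    by (simp only: Collect_pairs_eq_image[of "\<lambda>i j x. e i x - e j x"]
        Collect_pairs_eq_image[of "\<lambda>i j x. e i x + e j x"])
      (cases rule: cases_BCD, auto)
qed

definition pairs_off_last :: "(nat \<times> nat) set" where
  "pairs_off_last = {p. fst p < snd p \<and> snd p < n \<and> block (fst p) < last_block}"

definition coords_off_last :: "nat set" where
  "coords_off_last = {i. i < n \<and> block i < last_block}"

definition axis_roots_off_last :: "(nat \<Rightarrow> int) set" where
  "axis_roots_off_last = (if T = TD then {} else axis_root T ` coords_off_last)"

lemma pos_roots_minus_H_BCD:
  "pos_roots T n - pos_roots_H T n d
     = (\<lambda>p. e_diff (fst p) (snd p)) ` cross_pairs block n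
       \<union> (\<lambda>p. e_sum (fst p) (snd p)) ` pairs_off_last \<union> axis_roots_off_last"
proof -
  have image_filter: "{a \<in> f ` Q. R a} = f ` {q\<in>Q. R (f q)}" for f :: "'a \<Rightarrow> 'b" and Q R
    by auto
  have Un_filter: "{a \<in> A \<union> B. R a} = {a\<in>A. R a} \<union> {a\<in>B. R a}" for A B :: "'a set" and R
    by auto
  have if_filter: "{a \<in> (if P then {} else A). R a} = (if P then {} else {a\<in>A. R a})"
    for A :: "'a set" and P R
    by auto
  have "pos_roots T n - pos_roots_H T n d = {\<alpha>\<in>pos_roots T n. \<not> in_span_white T n d \<alpha>}"
    by (auto simp: pos_roots_H_def)
  also have "\<dots> = (\<lambda>p. e_diff (fst p) (snd p))
        ` {p\<in>{p. fst p < snd p \<and> snd p < n}. \<not> in_span_white T n d (e_diff (fst p) (snd p))}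
     \<union> (\<lambda>p. e_sum (fst p) (snd p))
        ` {p\<in>{p. fst p < snd p \<and> snd p < n}. \<not> in_span_white T n d (e_sum (fst p) (snd p))}
     \<union> (if T = TD then {} else axis_root T ` {i\<in>{..<n}. \<not> in_span_white T n d (axis_root T i)})"
    unfolding pos_roots_BCD by (simp only: Un_filter if_filter image_filter)
  also have "{p\<in>{p. fst p < snd p \<and> snd p < n}. \<not> in_span_white T n d (e_diff (fst p) (snd p))}
      = cross_pairs block n"
    unfolding cross_pairs_def using in_span_white_e_diff_iff by auto
  also have "{p\<in>{p. fst p < snd p \<and> snd p < n}. \<not> in_span_white T n d (e_sum (fst p) (snd p))}
      = pairs_off_last"
    unfolding pairs_off_last_def using in_span_white_e_sum_iff block_le_last
    by (force simp: le_less)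
  also have "(if T = TD then {}
        else axis_root T ` {i\<in>{..<n}. \<not> in_span_white T n d (axis_root T i)})
      = axis_roots_off_last"
    unfolding axis_roots_off_last_def coords_off_last_def
    using in_span_white_axis_root_iff block_le_last by (force simp: le_less)
  finally show ?thesis .
qed

lemma finite_pairs_off_last: "finite pairs_off_last"
  by (rule finite_subset[of _ "{..<n} \<times> {..<n}"]) (auto simp: pairs_off_last_def)

lemma sum_axis_roots_off_last:
  "(\<Sum>\<alpha>\<in>axis_roots_off_last. \<alpha> x) = axis_coeff T * (if x \<in> coords_off_last then 1 else 0)"
proof (cases "T = TD")
  case True
  then show ?thesis
    unfolding axis_roots_off_last_def axis_coeff_def by simp
next
  case False
  have "(\<Sum>\<alpha>\<in>axis_roots_off_last. \<alpha> x) = (\<Sum>i\<in>coords_off_last. axis_root T i x)"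
    using False by (simp add: axis_roots_off_last_def sum.reindex[OF inj_on_axis_root])
  moreover have "finite coords_off_last"
    by (simp add: coords_off_last_def)
  ultimately show ?thesis
    using False
    by (cases rule: cases_BCD)
      (simp_all add: axis_root_def axis_coeff_def sum_e_index sum_distrib_left[symmetric])
qed

lemma koszul_form_BCD_sum:
  "koszul_form T n d x
     = (\<Sum>p\<in>cross_pairs block n. e_diff (fst p) (snd p) x)
       + (\<Sum>p\<in>pairs_off_last. e_sum (fst p) (snd p) x)
       + axis_coeff T * (if x \<in> coords_off_last then 1 else 0)"
proof -
  let ?D = "(\<lambda>p. e_diff (fst p) (snd p)) ` cross_pairs block n"
    and ?S = "(\<lambda>p. e_sum (fst p) (snd p)) ` pairs_off_last"
  have finite: "finite ?D" "finite ?S" "finite axis_roots_off_last"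
    using finite_cross_pairs finite_pairs_off_last
    by (auto simp: axis_roots_off_last_def coords_off_last_def)
  have distinct: "\<forall>p\<in>cross_pairs block n. fst p \<noteq> snd p" "\<forall>p\<in>pairs_off_last. fst p \<noteq> snd p"
    by (auto simp: cross_pairs_def pairs_off_last_def)
  have Un_Int_empty: "(A \<union> B) \<inter> C = {}" if "A \<inter> R = {}" "B \<inter> R = {}" "C \<subseteq> R"
    for A B C R :: "(nat \<Rightarrow> int) set"
    using that by blast
  have "axis_roots_off_last \<subseteq> range (axis_root T)"
    by (auto simp: axis_roots_off_last_def)
  then have "(?D \<union> ?S) \<inter> axis_roots_off_last = {}"
    by (rule Un_Int_empty[OF e_diff_image_Int_axis_roots[OF distinct(1)]
          e_sum_image_Int_axis_roots[OF distinct(2)]])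
  moreover have "?D \<inter> ?S = {}"
    by (rule e_diff_image_Int_e_sum_image[OF distinct(1)])
  ultimately have "koszul_form T n d x
      = (\<Sum>\<alpha>\<in>?D. \<alpha> x) + (\<Sum>\<alpha>\<in>?S. \<alpha> x) + (\<Sum>\<alpha>\<in>axis_roots_off_last. \<alpha> x)"
    unfolding koszul_form_def pos_roots_minus_H_BCD using finite by (simp add: sum.union_disjoint)
  also have "(\<Sum>\<alpha>\<in>?D. \<alpha> x) = (\<Sum>p\<in>cross_pairs block n. e_diff (fst p) (snd p) x)"
    by (rule sum.reindex[unfolded comp_def])
      (rule inj_on_subset[OF inj_on_e_diff], auto simp: cross_pairs_def)
  also have "(\<Sum>\<alpha>\<in>?S. \<alpha> x) = (\<Sum>p\<in>pairs_off_last. e_sum (fst p) (snd p) x)"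
    by (rule sum.reindex[unfolded comp_def])
      (rule inj_on_subset[OF inj_on_e_sum], auto simp: pairs_off_last_def)
  finally show ?thesis
    by (simp only: sum_axis_roots_off_last)
qed

text \<open>Outside the last block the roots \<open>e\<^sub>x + e\<^sub>j\<close> and the axis root at \<open>x\<close> add
  \<open>n - 1 + axis_coeff T\<close> to the coordinate \<open>x\<close>.  Inside it the only contributions, \<open>-1\<close> from
  each \<open>e\<^sub>i - e\<^sub>x\<close> and \<open>+1\<close> from each \<open>e\<^sub>i + e\<^sub>x\<close> with \<open>i\<close> in an earlier block, cancel.\<close>

definition koszul_coord :: "nat \<Rightarrow> int" where
  "koszul_coord b = (if b < last_block
     then int (coords_after block n b) - int (coords_before block n b) + int n - 1 + axis_coeff T
     else 0)"

lemma koszul_form_BCD: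
  assumes "x < n"
  shows "koszul_form T n d x = koszul_coord (block x)"
proof -
  have after: "(x, j) \<in> pairs_off_last \<longleftrightarrow> block x < last_block \<and> x < j \<and> j < n" for j
    by (auto simp: pairs_off_last_def)
  have before: "(i, x) \<in> pairs_off_last \<longleftrightarrow>
      (if block x < last_block then i < x else i < n \<and> block i < block x)" for i
    using assms block_mono[of i x] block_mono[of x i] block_le_last[of x] block_le_last[of i]
    by (auto simp: pairs_off_last_def not_less) (meson not_le)
  have sum: "koszul_form T n d x
      = int (coords_after block n (block x)) - int (coords_before block n (block x))
        + (int (card {j. (x, j) \<in> pairs_off_last}) + int (card {i. (i, x) \<in> pairs_off_last}))
        + axis_coeff T * (if x \<in> coords_off_last then 1 else 0)"
    unfolding koszul_form_BCD_sum sum_e_diff_cross_pairs[OF mono_block_index assms]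
      sum_e_sum_pairs[OF finite_pairs_off_last] coords_after_def coords_before_def ..
  show ?thesis
  proof (cases "block x < last_block")
    case True
    then have "{j. (x, j) \<in> pairs_off_last} = {Suc x..<n}" "{i. (i, x) \<in> pairs_off_last} = {..<x}"
      using assms by (auto simp: after before)
    then show ?thesis
      using sum True assms
      by (simp add: koszul_coord_def coords_off_last_def of_nat_diff)
  next
    case False
    then have "block x = last_block"
      using block_le_last[of x] by simp
    then have "{j. (x, j) \<in> pairs_off_last} = {}"
        "{i. (i, x) \<in> pairs_off_last} = {i\<in>{..<n}. block i < block x}"
        "coords_after block n (block x) = 0"
      using after before block_le_last by (auto simp: coords_after_def not_less)
    then show ?thesis
      using sum False
      by (simp add: koszul_coord_def coords_off_last_def coords_before_def)
  qed
qed

lemma koszul_pairing_inner_root: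
  assumes "Suc k < n"
  shows "coroot_pairing T n (koszul_form T n d) (simple_root T n k)
       = of_int (koszul_coord (block k) - koszul_coord (block (Suc k)))"
proof -
  have "ncoords T n = n"
    using not_TA by (simp add: ncoords_def)
  then show ?thesis
    using assms
    by (simp add: coroot_pairing_def simple_root_inner inner_e_diff koszul_form_BCD
        e_diff_apply e_def)
qed

lemma koszul_pairing_last_root:
  "coroot_pairing T n (koszul_form T n d) (simple_root T n (n - 1))
     = of_int (if T = TB then 2 * koszul_coord (block (n - 1))
               else if T = TC then koszul_coord (block (n - 1))
               else koszul_coord (block (n - 2)) + koszul_coord (block (n - 1)))"
proof -
  let ?\<sigma> = "koszul_form T n d" and ?\<beta> = "simple_root T n (n - 1)"
  have "n - 2 \<noteq> n - 1" "n - 2 < n" "n - 1 < n"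
    using two_le_n by auto
  have \<sigma>: "?\<sigma> (n - 1) = koszul_coord (block (n - 1))" "?\<sigma> (n - 2) = koszul_coord (block (n - 2))"
    using koszul_form_BCD two_le_n by simp_all
  have "ncoords T n = n"
    using not_TA by (simp add: ncoords_def)
  then have pairing:
      "coroot_pairing T n ?\<sigma> ?\<beta> = of_int (2 * inner n ?\<sigma> ?\<beta>) / of_int (inner n ?\<beta> ?\<beta>)"
    by (simp add: coroot_pairing_def)
  consider "T = TB" | "T = TC" | "T = TD"
    by (rule cases_BCD)
  then show ?thesis
  proof cases
    case 1
    then have "?\<beta> = e (n - 1)"
      using simple_root_TB_last by simp
    then have "inner n ?\<sigma> ?\<beta> = ?\<sigma> (n - 1)" "inner n ?\<beta> ?\<beta> = 1"
      using \<open>n - 1 < n\<close> by (simp_all add: inner_e e_apply)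
    then show ?thesis
      using pairing \<sigma> 1 by simp
  next
    case 2
    then have "?\<beta> = (\<lambda>x. 2 * e (n - 1) x)"
      using simple_root_TC_last by simp
    then have "inner n ?\<sigma> ?\<beta> = 2 * ?\<sigma> (n - 1)" "inner n ?\<beta> ?\<beta> = 4"
      using \<open>n - 1 < n\<close> by (simp_all add: inner_double_e, simp add: e_apply)
    then show ?thesis
      using pairing \<sigma> 2 by simp
  next
    case 3
    then have "?\<beta> = e_sum (n - 2) (n - 1)"
      using simple_root_TD_last by simp
    then have "inner n ?\<sigma> ?\<beta> = ?\<sigma> (n - 2) + ?\<sigma> (n - 1)" "inner n ?\<beta> ?\<beta> = 2"
      using \<open>n - 1 < n\<close> \<open>n - 2 < n\<close> \<open>n - 2 \<noteq> n - 1\<close>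
      by (simp_all add: inner_e_sum e_sum_apply e_apply)
    then show ?thesis
      using pairing \<sigma> 3 by simp
  qed
qed

lemma koszul_coord_last_block: "koszul_coord last_block = 0"
  by (simp add: koszul_coord_def)

lemma koszul_pairing_white:
  assumes "k < n" and "\<not> d ! k"
  shows "coroot_pairing T n (koszul_form T n d) (simple_root T n k) = 0"
proof (cases "Suc k < n")
  case True
  then show ?thesis
    using koszul_pairing_inner_root block_Suc assms by simp
next
  case False
  then have "k = n - 1"
    using assms by simp
  then have "block (n - 1) = last_block" and "T = TD \<Longrightarrow> block (n - 2) = last_block"
    using block_Suc[of "n - 1"] two_le_n assms block_n fork_same_block by simp_all
  then show ?thesis
    using koszul_pairing_last_root koszul_coord_last_block \<open>k = n - 1\<close>
    by (cases rule: cases_BCD) simp_all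
qed

lemma koszul_pairing_black_inner:
  assumes "k < n" and "d ! k" and "Suc (block k) < last_block"
  shows "coroot_pairing T n (koszul_form T n d) (simple_root T n k)
       = of_nat (block_len (block k) + block_len (Suc (block k)))"
proof -
  have "Suc k < n"
  proof (rule ccontr)
    assume "\<not> Suc k < n"
    then have "Suc k = n" using \<open>k < n\<close> by simp
    then show False
      using block_Suc[OF \<open>k < n\<close>] block_n assms by simp
  qed
  then show ?thesis
    using koszul_pairing_inner_root block_Suc[OF \<open>k < n\<close>] assms
      coords_balance_step[of block n "block k"]
    by (simp add: koszul_coord_def)
qed

lemma koszul_pairing_black_before_last:
  assumes "Suc k < n" and "d ! k" and "Suc (block k) = last_block"
  shows "coroot_pairing T n (koszul_form T n d) (simple_root T n k)
       = of_int (int (block_len (block k)) + 2 * int (block_len last_block) - 1 + axis_coeff T)"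
proof -
  have "block k < block y \<longleftrightarrow> block y = last_block" for y
    using assms(3) block_le_last[of y] by auto
  then have "coords_after block n (block k) = block_len last_block"
    by (simp add: coords_after_def block_size_def)
  moreover have
    "coords_before block n (block k) + block_len (block k) + coords_after block n (block k) = n"
    by (rule coords_partition)
  ultimately have "koszul_coord (block k)
      = int (block_len (block k)) + 2 * int (block_len last_block) - 1 + axis_coeff T"
    using assms(3) by (simp add: koszul_coord_def)
  moreover have "block (Suc k) = last_block"
    using block_Suc[of k] assms by simp
  ultimately show ?thesis
    using koszul_pairing_inner_root[OF assms(1)] koszul_coord_last_block by simp
qed

lemma koszul_pairing_black_end:
  assumes "d ! (n - 1)"
  shows "coroot_pairing T n (koszul_form T n d) (simple_root T n (n - 1))
       = of_int (if T = TB then 2 * int (block_len (block (n - 1)))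
                 else if T = TC then int (block_len (block (n - 1))) + 1
                 else 2 * int (block_len (block (n - 1))) - 2)"
proof -
  let ?b = "block (n - 1)"
  have "block n = Suc ?b"
    using block_Suc[of "n - 1"] assms two_le_n by simp
  then have "?b < last_block"
    using block_n by simp
  have "block y \<le> ?b" if "y < n" for y
    using block_mono[of y "n - 1"] that by simp
  then have "{y\<in>{..<n}. ?b < block y} = {}"
    using leD by blast
  then have "coords_after block n ?b = 0"
    by (simp add: coords_after_def)
  moreover have "coords_before block n ?b + block_len ?b + coords_after block n ?b = n"
    by (rule coords_partition)
  ultimately have "koszul_coord ?b = int (block_len ?b) - 1 + axis_coeff T"
    using \<open>?b < last_block\<close> by (simp add: koszul_coord_def)
  moreover have "T = TD \<Longrightarrow> block (n - 2) = ?b"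
    by (rule fork_same_block)
  ultimately show ?thesis
    using koszul_pairing_last_root by (cases rule: cases_BCD) (simp_all add: axis_coeff_def)
qed

text \<open>The Koszul number at the black node closing block \<open>b\<close>.  The last black node is
  \<open>\<alpha>\<^sub>n\<^sub>-\<^sub>1\<close> exactly when the last block is empty.\<close>

definition koszul_number :: "nat \<Rightarrow> int" where
  "koszul_number b =
    (if Suc b < last_block then int (block_len b + block_len (Suc b))
     else if 0 < block_len last_block
     then int (block_len b) + 2 * int (block_len last_block) - 1 + axis_coeff T
     else if T = TB then 2 * int (block_len b)
     else if T = TC then int (block_len b) + 1
     else 2 * int (block_len b) - 2)"

lemma last_block_nonempty_iff:
  assumes "k < n" and "d ! k" and "Suc (block k) = last_block"
  shows "0 < block_len last_block \<longleftrightarrow> Suc k < n"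
proof
  assume "Suc k < n"
  moreover have "block (Suc k) = last_block"
    using block_Suc assms by simp
  ultimately have "Suc k \<in> {y\<in>{..<n}. block y = last_block}"
    by simp
  then show "0 < block_len last_block"
    unfolding block_size_def by (auto simp: card_gt_0_iff)
next
  assume "0 < block_len last_block"
  then obtain y where "y < n" and "block y = last_block"
    unfolding block_size_def by (auto simp: card_gt_0_iff)
  then have "\<not> y \<le> k"
    using block_mono[of y k] assms(3) by auto
  then show "Suc k < n"
    using \<open>y < n\<close> by simp
qed

lemma koszul_pairing_black:
  assumes "k < n" and "d ! k"
  shows "coroot_pairing T n (koszul_form T n d) (simple_root T n k)
       = of_int (koszul_number (block k))"
proof -
  have "block (Suc k) = Suc (block k)"
    using block_Suc assms by simp
  then have "Suc (block k) \<le> last_block"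
    using block_le_last[of "Suc k"] by simp
  then consider "Suc (block k) < last_block" | "Suc (block k) = last_block" "Suc k < n"
    | "Suc (block k) = last_block" "k = n - 1"
    using assms(1) by linarith
  then show ?thesis
  proof cases
    case 1
    then show ?thesis
      using koszul_pairing_black_inner[OF assms] by (simp add: koszul_number_def)
  next
    case 2
    then show ?thesis
      using koszul_pairing_black_before_last[OF 2(2) assms(2) 2(1)]
        last_block_nonempty_iff[OF assms]
      by (simp add: koszul_number_def)
  next
    case 3
    then show ?thesis
      using koszul_pairing_black_end assms last_block_nonempty_iff[OF assms]
      by (simp add: koszul_number_def)
  qed
qed

theorem koszul_numbers_BCD:
  "koszul_numbers T n d = map (\<lambda>b. of_int (koszul_number b)) [0..<last_block]"
proof -
  have "koszul_numbers T n d
      = map (\<lambda>k. of_int (koszul_number (block k))) (filter (\<lambda>k. d ! k) [0..<length d])"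
    unfolding koszul_numbers_def using length_d by (auto simp: koszul_pairing_black)
  then show ?thesis
    by (simp add: block_index_black_nodes[symmetric])
qed

end

section \<open>The standard complex structure\<close>

definition block_diagram :: "nat list \<Rightarrow> bool list" where
  "block_diagram L = concat (map (\<lambda>a. replicate (a - 1) False @ [True]) L)"

lemma block_diagram_Nil [simp]: "block_diagram [] = []"
  by (simp add: block_diagram_def)

lemma block_diagram_Cons:
  "block_diagram (a # L) = replicate (a - 1) False @ [True] @ block_diagram L"
  by (simp add: block_diagram_def)

lemma block_diagram_snoc:
  "block_diagram (L @ [a]) = block_diagram L @ replicate (a - 1) False @ [True]"
  by (simp add: block_diagram_def)

lemma length_block_diagram: "\<forall>a\<in>set L. 1 \<le> a \<Longrightarrow> length (block_diagram L) = sum_list L"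
  by (induction L) (auto simp: block_diagram_Cons)

lemma num_black_block_diagram [simp]: "num_black (block_diagram L) = length L"
  by (induction L) (auto simp: block_diagram_Cons)

lemma block_size_cong:
  "(\<And>y. y < N \<Longrightarrow> g y = h y) \<Longrightarrow> block_size g N b = block_size h N b"
  unfolding block_size_def by (metis (mono_tags, lifting) lessThan_iff mem_Collect_eq)

lemma block_size_block_diagram:
  assumes "\<forall>a\<in>set L. 1 \<le> a" and "b < length L"
  shows "block_size (block_index (block_diagram L)) (sum_list L) b = L ! b"
  using assms
proof (induction L arbitrary: b)
  case Nil
  then show ?case by simp
next
  case (Cons a L)
  have "1 \<le> a"
    using Cons.prems by simp
  have index: "block_index (block_diagram (a # L)) y
      = (if y < a then 0 else Suc (block_index (block_diagram L) (y - a)))" for y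
    using \<open>1 \<le> a\<close>
    by (auto simp: block_diagram_Cons block_index_append block_index_def take_Cons' min_def
        nth_append not_less le_Suc_eq)
  show ?case
  proof (cases b)
    case 0
    have "{y\<in>{..<sum_list (a # L)}. block_index (block_diagram (a # L)) y = b} = {..<a}"
      using 0 index by auto
    then show ?thesis
      using 0 by (simp add: block_size_def)
  next
    case (Suc b')
    have "{y\<in>{..<sum_list (a # L)}. block_index (block_diagram (a # L)) y = b}
        = (\<lambda>y. y + a) ` {y\<in>{..<sum_list L}. block_index (block_diagram L) y = b'}"
    proof (rule set_eqI, rule iffI)
      fix y
      assume "y \<in> {y\<in>{..<sum_list (a # L)}. block_index (block_diagram (a # L)) y = b}"
      then show "y \<in> (\<lambda>y. y + a) ` {y\<in>{..<sum_list L}. block_index (block_diagram L) y = b'}"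
        using Suc index by (intro image_eqI[where x = "y - a"]) (auto split: if_splits)
    qed (use Suc index in auto)
    moreover have "b' < length L"
      using Cons.prems Suc by simp
    ultimately show ?thesis
      using Cons Suc by (simp add: block_size_def card_image)
  qed
qed

lemma block_diagram_ends_black:
  assumes "L \<noteq> []"
  shows "block_diagram L = butlast (block_diagram L) @ [True]"
proof -
  obtain L' a where "L = L' @ [a]"
    using assms by (cases L rule: rev_cases) auto
  then have "block_diagram L = (block_diagram L' @ replicate (a - 1) False) @ [True]"
    by (simp add: block_diagram_snoc)
  then show ?thesis
    by (metis butlast_snoc)
qed

lemma block_index_block_diagram_less:
  assumes "L \<noteq> []" and "y < length (block_diagram L)"
  shows "block_index (block_diagram L) y < length L"
proof -
  let ?G = "block_diagram L"
  have "block_index ?G y = block_index (butlast ?G @ [True]) y"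
    using block_diagram_ends_black[OF assms(1)] by simp
  also have "\<dots> = block_index (butlast ?G) y"
  proof -
    have "y \<le> length (butlast ?G)"
      using assms(2) by simp
    then show ?thesis
      by (simp add: block_index_append)
  qed
  also have "\<dots> \<le> num_black (butlast ?G)"
    by (rule block_index_le_num_black)
  also have "\<dots> < length L"
    using arg_cong[OF block_diagram_ends_black[OF assms(1)], of num_black] by simp
  finally show ?thesis .
qed

lemma one_le_sum_list:
  fixes L :: "nat list"
  assumes "\<forall>a\<in>set L. 1 \<le> a" and "L \<noteq> []"
  shows "1 \<le> sum_list L"
proof -
  have "last L \<le> sum_list L"
    using member_le_sum_list[OF last_in_set[OF assms(2)]] by simp
  moreover have "1 \<le> last L"
    using assms by simp
  ultimately show ?thesis
    by linarith
qed

theorem koszul_numbers_TA_block_diagram: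
  assumes pos: "\<forall>a\<in>set L. 1 \<le> a" and "L \<noteq> []"
  shows "koszul_numbers TA (sum_list L - 1) (butlast (block_diagram L))
       = map (\<lambda>i. of_nat (L ! i + L ! (i + 1))) [0..<length L - 1]"
proof -
  let ?G = "block_diagram L" and ?d = "butlast (block_diagram L)" and ?n = "sum_list L - 1"
  have G: "?G = ?d @ [True]"
    by (rule block_diagram_ends_black[OF \<open>L \<noteq> []\<close>])
  have "Suc ?n = sum_list L"
    using one_le_sum_list[OF assms] by simp
  then have len: "length ?d = ?n"
    using length_block_diagram[OF pos] by simp
  have index: "block_index ?d y = block_index ?G y" if "y < Suc ?n" for y
    using that len by (subst G) (simp add: block_index_append)
  have sizes: "block_size (block_index ?d) (Suc ?n) b = L ! b" if "b < length L" for b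
  proof -
    have "block_size (block_index ?d) (Suc ?n) b = block_size (block_index ?G) (Suc ?n) b"
      by (rule block_size_cong) (rule index)
    also have "\<dots> = L ! b"
      using block_size_block_diagram[OF pos that] \<open>Suc ?n = sum_list L\<close> by simp
    finally show ?thesis .
  qed
  have "num_black ?d = length L - 1"
    using arg_cong[OF G, of num_black] by simp
  then show ?thesis
    using koszul_numbers_TA[OF len] sizes by simp
qed

lemma block_diagram_fork_white:
  assumes "L \<noteq> []" and "2 \<le> last L"
  shows "\<not> block_diagram L ! (length (block_diagram L) - 2)"
proof -
  obtain L' a where "L = L' @ [a]"
    using assms(1) by (cases L rule: rev_cases) auto
  moreover have "replicate (a - 1) False @ [True] = replicate (a - 2) False @ [False, True]"
    if "2 \<le> a"
  proof -
    have "a - 1 = Suc (a - 2)"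
      using that by simp
    then show ?thesis
      by (simp add: replicate_app_Cons_same)
  qed
  ultimately have "block_diagram L = (block_diagram L' @ replicate (a - 2) False) @ [False, True]"
    using assms(2) by (simp add: block_diagram_snoc)
  then show ?thesis
    by (simp add: nth_append)
qed

lemma BCD_diagram_block_diagram:
  assumes "T \<noteq> TA" and pos: "\<forall>a\<in>set L. 1 \<le> a" and "L \<noteq> []" and "2 \<le> last L"
    and "T = TD \<Longrightarrow> r \<noteq> 1"
  shows "BCD_diagram T (sum_list L + r) (block_diagram L @ replicate r False)"
proof
  let ?G = "block_diagram L"
  have len: "length ?G = sum_list L"
    by (rule length_block_diagram[OF pos])
  show "length (?G @ replicate r False) = sum_list L + r"
    using len by simp
  have "last L \<le> sum_list L"
    using member_le_sum_list[OF last_in_set[OF \<open>L \<noteq> []\<close>]] by simp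
  then show "2 \<le> sum_list L + r"
    using \<open>2 \<le> last L\<close> by simp
  show "\<not> (?G @ replicate r False) ! (sum_list L + r - 2)" if "T = TD"
  proof (cases "r = 0")
    case True
    then show ?thesis
      using block_diagram_fork_white[OF \<open>L \<noteq> []\<close> \<open>2 \<le> last L\<close>] len \<open>2 \<le> sum_list L + r\<close>
      by (simp add: nth_append)
  next
    case False
    then have "length ?G \<le> sum_list L + r - 2" "sum_list L + r - 2 - length ?G < r"
      using assms(5)[OF that] len by simp_all
    then show ?thesis
      by (simp add: nth_append)
  qed
qed (use assms in auto)

lemma block_index_padded_block_diagram:
  "block_index (block_diagram L @ replicate r False) y
     = (if y < length (block_diagram L) then block_index (block_diagram L) y else length L)"
  by (simp add: block_index_append block_index_beyond)

lemma block_size_padded_block_diagram: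
  assumes pos: "\<forall>a\<in>set L. 1 \<le> a" and "L \<noteq> []"
  shows "b < length L \<Longrightarrow>
      block_size (block_index (block_diagram L @ replicate r False)) (sum_list L + r) b = L ! b"
    and "block_size (block_index (block_diagram L @ replicate r False)) (sum_list L + r) (length L)
      = r"
proof -
  let ?G = "block_diagram L"
  have len: "length ?G = sum_list L"
    by (rule length_block_diagram[OF pos])
  show "block_size (block_index (?G @ replicate r False)) (sum_list L + r) b = L ! b"
    if "b < length L"
  proof -
    have "y < sum_list L + r \<and> block_index (?G @ replicate r False) y = b
        \<longleftrightarrow> y < sum_list L \<and> block_index ?G y = b" for y
      using that len by (simp add: block_index_padded_block_diagram)
    then have "{y\<in>{..<sum_list L + r}. block_index (?G @ replicate r False) y = b}
        = {y\<in>{..<sum_list L}. block_index ?G y = b}"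
      by blast
    then show ?thesis
      using block_size_block_diagram[OF pos that] by (simp add: block_size_def)
  qed
  have "block_index (?G @ replicate r False) y = length L \<longleftrightarrow> sum_list L \<le> y" for y
  proof (cases "y < sum_list L")
    case True
    then show ?thesis
      using block_index_block_diagram_less[OF \<open>L \<noteq> []\<close>, of y] len
      by (simp add: block_index_padded_block_diagram)
  qed (use len in \<open>simp add: block_index_padded_block_diagram\<close>)
  then have "{y\<in>{..<sum_list L + r}. block_index (?G @ replicate r False) y = length L}
      = {sum_list L..<sum_list L + r}"
    by fastforce
  then show "block_size (block_index (?G @ replicate r False)) (sum_list L + r) (length L) = r"
    by (simp add: block_size_def)
qed

definition end_koszul_number :: "ctype \<Rightarrow> nat \<Rightarrow> nat \<Rightarrow> nat" where
  "end_koszul_number T a r =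
    (if T = TB then (if r = 0 then 2 * a else a + 2 * r)
     else if T = TC then a + 2 * r + 1
     else if r = 0 then 2 * (a - 1) else a + 2 * r - 1)"

lemma koszul_number_end_block_diagram:
  assumes "T \<noteq> TA" and pos: "\<forall>a\<in>set L. 1 \<le> a" and "L \<noteq> []" and "2 \<le> last L"
    and "T = TD \<Longrightarrow> r \<noteq> 1"
  shows "BCD_diagram.koszul_number T (sum_list L + r) (block_diagram L @ replicate r False)
           (length L - 1)
       = int (end_koszul_number T (last L) r)"
proof -
  interpret BCD_diagram T "sum_list L + r" "block_diagram L @ replicate r False"
    by (rule BCD_diagram_block_diagram[OF assms])
  note sizes = block_size_padded_block_diagram[OF pos \<open>L \<noteq> []\<close>, where r = r]
  have "block_len (length L - 1) = last L" "block_len (length L) = r"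
    using sizes(1)[of "length L - 1"] sizes(2) \<open>L \<noteq> []\<close> by (simp_all add: last_conv_nth)
  moreover have "koszul_number (length L - 1)
      = (if 0 < block_len (length L)
         then int (block_len (length L - 1)) + 2 * int (block_len (length L)) - 1 + axis_coeff T
         else if T = TB then 2 * int (block_len (length L - 1))
         else if T = TC then int (block_len (length L - 1)) + 1
         else 2 * int (block_len (length L - 1)) - 2)"
    using \<open>L \<noteq> []\<close> by (simp add: koszul_number_def)
  ultimately have "koszul_number (length L - 1)
      = (if 0 < r then int (last L) + 2 * int r - 1 + axis_coeff T
         else if T = TB then 2 * int (last L)
         else if T = TC then int (last L) + 1
         else 2 * int (last L) - 2)"
    by (simp only:)
  then show ?thesis
    using \<open>2 \<le> last L\<close>
    by (cases rule: cases_BCD) (auto simp: end_koszul_number_def axis_coeff_def of_nat_diff)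
qed

theorem koszul_numbers_BCD_block_diagram:
  assumes "T \<noteq> TA" and pos: "\<forall>a\<in>set L. 1 \<le> a" and "L \<noteq> []" and "2 \<le> last L"
    and "T = TD \<Longrightarrow> r \<noteq> 1"
  shows "koszul_numbers T (sum_list L + r) (block_diagram L @ replicate r False)
       = map (\<lambda>i. of_nat (L ! i + L ! (i + 1))) [0..<length L - 1]
         @ [of_nat (end_koszul_number T (last L) r)]"
proof -
  interpret BCD_diagram T "sum_list L + r" "block_diagram L @ replicate r False"
    by (rule BCD_diagram_block_diagram[OF assms])
  have inner: "koszul_number b = int (L ! b + L ! (b + 1))" if "b < length L - 1" for b
  proof -
    have "Suc b < length L"
      using that by simp
    then show ?thesis
      using block_size_padded_block_diagram(1)[OF pos \<open>L \<noteq> []\<close>, where r = r]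
      by (simp add: koszul_number_def)
  qed
  have "[0..<length L] = [0..<length L - 1] @ [length L - 1]"
    using \<open>L \<noteq> []\<close> by (cases L) auto
  then show ?thesis
    using koszul_numbers_BCD koszul_number_end_block_diagram[OF assms] inner by simp
qed

definition J0_blocks :: "nat \<Rightarrow> nat list \<Rightarrow> nat list" where
  "J0_blocks n0 ns = replicate n0 1 @ ns"

lemma J0_blocks_pos: "\<forall>m\<in>set ns. 1 < m \<Longrightarrow> \<forall>a\<in>set (J0_blocks n0 ns). 1 \<le> a"
  by (auto simp: J0_blocks_def)

lemma J0_blocks_not_Nil: "ns \<noteq> [] \<Longrightarrow> J0_blocks n0 ns \<noteq> []"
  by (simp add: J0_blocks_def)

lemma two_le_last_J0_blocks: "ns \<noteq> [] \<Longrightarrow> \<forall>m\<in>set ns. 1 < m \<Longrightarrow> 2 \<le> last (J0_blocks n0 ns)"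
  using last_in_set[of ns] by (fastforce simp: J0_blocks_def)

lemma J0_diagram_eq_block_diagram:
  "J0_diagram T n0 ns r
     = (if T = TA then butlast (block_diagram (J0_blocks n0 ns))
        else block_diagram (J0_blocks n0 ns) @ replicate r False)"
  by (simp add: J0_diagram_def block_diagram_def J0_blocks_def)

lemma flag_rank_eq_sum_J0_blocks:
  "flag_rank T n0 ns r
     = (if T = TA then sum_list (J0_blocks n0 ns) - 1 else sum_list (J0_blocks n0 ns) + r)"
  by (simp add: flag_rank_def J0_blocks_def sum_list_replicate)

lemma koszul_expected_eq_J0_blocks:
  assumes "ns \<noteq> []"
  shows "koszul_expected T n0 ns r
      = map (\<lambda>i. J0_blocks n0 ns ! i + J0_blocks n0 ns ! (i + 1)) [0..<length (J0_blocks n0 ns) - 1]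
        @ (if T = TA then [] else [end_koszul_number T (last (J0_blocks n0 ns)) r])"
  using assms by (simp add: koszul_expected_def end_koszul_number_def J0_blocks_def Let_def)

theorem mainTheorem15:
  fixes T :: ctype and n0 r :: nat and ns :: "nat list"
  assumes "ns \<noteq> []"
    and "\<forall>m \<in> set ns. 1 < m"
    and "T = TA \<Longrightarrow> r = 0"
    and "T = TD \<Longrightarrow> r \<noteq> 1"
  shows "koszul_numbers T (flag_rank T n0 ns r) (J0_diagram T n0 ns r)
           = map of_nat (koszul_expected T n0 ns r)
       \<and> (\<forall>i < flag_rank T n0 ns r. \<not> J0_diagram T n0 ns r ! i \<longrightarrow>
            coroot_pairing T (flag_rank T n0 ns r)
              (koszul_form T (flag_rank T n0 ns r) (J0_diagram T n0 ns r))
              (simple_root T (flag_rank T n0 ns r) i) = 0)"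
proof -
  let ?L = "J0_blocks n0 ns"
  note L = J0_blocks_pos[OF assms(2)] J0_blocks_not_Nil[OF assms(1)]
    two_le_last_J0_blocks[OF assms(1,2)]
  note unfold = J0_diagram_eq_block_diagram flag_rank_eq_sum_J0_blocks
    koszul_expected_eq_J0_blocks[OF assms(1)]
  show ?thesis
  proof (cases "T = TA")
    case True
    then show ?thesis
      using koszul_numbers_TA_block_diagram[OF L(1,2)] koszul_pairing_white_TA
        length_block_diagram[OF L(1)]
      by (simp add: unfold)
  next
    case False
    interpret BCD_diagram T "sum_list ?L + r" "block_diagram ?L @ replicate r False"
      using BCD_diagram_block_diagram[OF False L assms(4)] .
    show ?thesis
      using koszul_numbers_BCD_block_diagram[OF False L assms(4)] koszul_pairing_white False
      by (simp add: unfold)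
  qed
qed

end
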